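(* Let $X$, $Y$ be metrizable spaces with $Y$ separable. For every nonzero countable ordinal $\xi$, if there is a sequence of $\mathbf{\Delta}^0_\xi$-functions from $X$ to $Y$ converging pointwise to $f:X\to Y$, then $f$ is of Baire class $\xi$. Conversely, if $\xi>1$ and $f: X\to Y$ is of Baire class $\xi$, then there is a sequence of $\mathbf{\Delta}^0_\xi$-functions from $X$ to $Y$ converging pointwise to $f$.
   Context: Work in ZF plus countable choice over the reals. For metrizable $X,Y$: $f:X\to Y$ is of Baire class $1$ if $f^{-1}(U)\in\mathbf{\Sigma}^0_2(X)$ for every open $U\subseteq Y$; for $1<\xi<\omega_1$, $f$ is of Baire class $\xi$ if it is the pointwise limit of a sequence of functions $f_n:X\to Y$ each of Baire class $\xi_n$ for some $1\le\xi_n<\xi$. For a nonzero countable ordinal $\eta$, $g:X\to Y$ is a $\mathbf{\Delta}^0_\eta$-function if $g^{-1}(A)\in\mathbf{\Sigma}^0_\eta(X)$ for every $A\in\mathbf{\Sigma}^0_\eta(Y)$. *)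

theory Defs
  imports "HOL-Analysis.Analysis"
begin

text \<open>Nonzero countable ordinals are represented by (nonempty) well-orders on subsets
of nat; the ordinal is the order type. Comparison of ordinals is BNF_Wellorder_Constructions.ordLess.\<close>

definition cord :: "nat rel \<Rightarrow> bool" where
  "cord r \<longleftrightarrow> Well_order r \<and> Field r \<noteq> {}"

definition is_one :: "nat rel \<Rightarrow> bool" where
  "is_one r \<longleftrightarrow> (\<exists>k. Field r = {k})"

definition ord_two :: "nat rel" where
  "ord_two = {(0,0),(0,1),(1,1)}"

text \<open>Additive Borel class Sigma^0_xi (X), xi = order type of r.
  Sigma^0_1 = open sets; for xi > 1: countable unions of complements of
  Sigma^0_eta sets with 1 <= eta < xi.\<close>
inductive bsigma :: "'a topology \<Rightarrow> nat rel \<Rightarrow> 'a set \<Rightarrow> bool" where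
  base: "\<lbrakk>cord r; is_one r; openin X A\<rbrakk> \<Longrightarrow> bsigma X r A"
| step: "\<lbrakk>cord r; \<not> is_one r;
          \<And>n::nat. cord (s n) \<and> (s n, r) \<in> BNF_Wellorder_Constructions.ordLess \<and> bsigma X (s n) (B n);
          A = (\<Union>n::nat. topspace X - B n)\<rbrakk> \<Longrightarrow> bsigma X r A"

inductive baire_cls :: "'a topology \<Rightarrow> 'b topology \<Rightarrow> nat rel \<Rightarrow> ('a \<Rightarrow> 'b) \<Rightarrow> bool"
  where
  base: "\<lbrakk>cord r; is_one r; f ` topspace X \<subseteq> topspace Y;
          \<forall>U. openin Y U \<longrightarrow> bsigma X ord_two {x \<in> topspace X. f x \<in> U}\<rbrakk>
         \<Longrightarrow> baire_cls X Y r f"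
| step: "\<lbrakk>cord r; \<not> is_one r; f ` topspace X \<subseteq> topspace Y;
          \<And>n::nat. cord (s n) \<and> (s n, r) \<in> BNF_Wellorder_Constructions.ordLess \<and> baire_cls X Y (s n) (g n);
          \<forall>x\<in>topspace X. limitin Y (\<lambda>n. g n x) (f x) sequentially\<rbrakk>
         \<Longrightarrow> baire_cls X Y r f"

definition delta0_fun :: "'a topology \<Rightarrow> 'b topology \<Rightarrow> nat rel \<Rightarrow> ('a \<Rightarrow> 'b) \<Rightarrow> bool" where
  "delta0_fun X Y r g \<longleftrightarrow> g ` topspace X \<subseteq> topspace Y \<and>
     (\<forall>A. bsigma Y r A \<longrightarrow> bsigma X r {x \<in> topspace X. g x \<in> A})"

end

theory Submission
  imports Defs
begin

text \<open>Both directions pass through \<open>\<Sigma>\<^sup>0\<^sub>\<xi>\<^sub>+\<^sub>1\<close>-measurability: preimages of open sets are countable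
  unions of complements of \<open>\<Sigma>\<^sup>0\<^sub>\<xi>\<close> sets. A pointwise limit of functions with \<open>\<Sigma>\<^sup>0\<^sub>\<xi>\<close> preimages of
  open sets is \<open>\<Sigma>\<^sup>0\<^sub>\<xi>\<^sub>+\<^sub>1\<close>-measurable, because \<open>f x \<in> U\<close> iff the values eventually stay in one of
  the closed sets \<open>{y. ball y (1 / Suc k) \<subseteq> U}\<close>; by induction on \<open>\<xi>\<close> the
  \<open>\<Sigma>\<^sup>0\<^sub>\<xi>\<^sub>+\<^sub>1\<close>-measurable functions are exactly those of Baire class \<open>\<xi>\<close>. Conversely, for \<open>\<xi> > 1\<close>
  fix a dense sequence in \<open>Y\<close> and write the preimage of each ball of radius \<open>1 / Suc m\<close> around
  one of its points as \<open>\<Union>\<^sub>i \<Inter>\<^sub>j\<close> of sets of class below \<open>\<xi>\<close>. The \<open>n\<close>-th approximant reads off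
  membership in only finitely many of these sets, so it is a \<open>\<Delta>\<^sup>0\<^sub>\<xi>\<close>-function (even
  \<open>\<Sigma>\<^sup>0\<^sub>\<eta>\<^sub>+\<^sub>1\<close>-measurable for some \<open>\<eta> < \<xi>\<close>, which feeds the induction), and it is built to
  converge to \<open>f\<close> pointwise.\<close>

section \<open>Countable ordinals\<close>

definition ord_one :: "nat rel" where
  "ord_one = {(0,0)}"

lemma Field_ord_one: "Field ord_one = {0}"
  by (auto simp: ord_one_def Field_def)

lemma Field_ord_two: "Field ord_two = {0,1}"
  by (auto simp: ord_two_def Field_def)

lemma cord_ord_one: "cord ord_one"
proof -
  have "ord_one = Restr natLeq {0}"
    by (auto simp: ord_one_def natLeq_def)
  then have "Well_order ord_one"
    using Well_order_Restr natLeq_Well_order by metis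
  then show ?thesis
    by (simp add: cord_def Field_ord_one)
qed

lemma is_one_ord_one: "is_one ord_one"
  by (auto simp: is_one_def Field_ord_one)

lemma cord_ord_two: "cord ord_two"
proof -
  have "ord_two = Restr natLeq {0,1}"
    by (auto simp: ord_two_def natLeq_def)
  then have "Well_order ord_two"
    using Well_order_Restr natLeq_Well_order by metis
  then show ?thesis
    by (simp add: cord_def Field_ord_two)
qed

lemma not_is_one_ord_two: "\<not> is_one ord_two"
  by (auto simp: is_one_def Field_ord_two)

lemma is_one_iff_subsingleton:
  assumes "cord r"
  shows "is_one r \<longleftrightarrow> (\<forall>a\<in>Field r. \<forall>b\<in>Field r. a = b)"
proof
  assume "\<forall>a\<in>Field r. \<forall>b\<in>Field r. a = b"
  moreover obtain k where "k \<in> Field r"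
    using assms unfolding cord_def by blast
  ultimately show "is_one r"
    unfolding is_one_def by blast
qed (auto simp: is_one_def)

lemma is_one_ordLeq:
  assumes "cord s" "(s, t) \<in> ordLeq" "is_one t"
  shows "is_one s"
proof -
  obtain f where f: "embed s t f"
    using assms(2) by (auto simp: ordLeq_def)
  have "inj_on f (Field s)"
    using embed_inj_on[OF _ f] assms(1) by (simp add: cord_def)
  moreover have "f ` Field s \<subseteq> Field t"
    using embed_Field[OF f] .
  moreover obtain k where "Field t = {k}"
    using assms(3) unfolding is_one_def by blast
  ultimately have "\<forall>a\<in>Field s. f a = k"
    by blast
  then have "\<forall>a\<in>Field s. \<forall>b\<in>Field s. a = b"
    using \<open>inj_on f (Field s)\<close> unfolding inj_on_def by metis
  then show ?thesis
    using assms(1) is_one_iff_subsingleton by blast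
qed

lemma ordLess_not_is_one:
  assumes "cord s" "(s, r) \<in> ordLess"
  shows "\<not> is_one r"
proof
  assume "is_one r"
  obtain f where f: "embed s r f"
    using assms(2) ordLess_imp_ordLeq by (auto simp: ordLeq_def)
  have "Field s \<noteq> {}"
    using assms(1) by (simp add: cord_def)
  then have "f ` Field s = Field r"
    using embed_Field[OF f] \<open>is_one r\<close> unfolding is_one_def
    by (metis image_is_empty subset_singletonD)
  then show False
    using BNF_Wellorder_Constructions.ordLess_Field[OF assms(2) f] by simp
qed

lemma ord_one_ordLess:
  assumes "cord r" "\<not> is_one r"
  shows "(ord_one, r) \<in> ordLess"
proof -
  have "(r, ord_one) \<notin> ordLeq"
    using is_one_ordLeq[OF assms(1) _ is_one_ord_one] assms(2) by blast
  then show ?thesis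
    using not_ordLeq_iff_ordLess cord_ord_one assms(1) unfolding cord_def by blast
qed

lemma ordLess_ord_two_iff:
  assumes "cord s"
  shows "(s, ord_two) \<in> ordLess \<longleftrightarrow> is_one s"
proof
  assume less: "(s, ord_two) \<in> ordLess"
  show "is_one s"
  proof (rule ccontr)
    assume "\<not> is_one s"
    then obtain a b where ab: "a \<in> Field s" "b \<in> Field s" "a \<noteq> b"
      using is_one_iff_subsingleton[OF assms] by blast
    obtain f where f: "embed s ord_two f"
      using less ordLess_imp_ordLeq by (auto simp: ordLeq_def)
    have "inj_on f (Field s)"
      using embed_inj_on[OF _ f] assms by (simp add: cord_def)
    then have "f a \<noteq> f b"
      using ab by (meson inj_onD)
    moreover have sub: "f ` Field s \<subseteq> {0,1}"
      using embed_Field[OF f] Field_ord_two by simp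
    moreover have "f a \<in> {0,1}" "f b \<in> {0,1}"
      using sub ab by auto
    ultimately have "{0,1} \<subseteq> f ` Field s"
      using ab by (auto, (metis image_eqI)+)
    then have "f ` Field s = Field ord_two"
      using sub Field_ord_two by blast
    then show False
      using BNF_Wellorder_Constructions.ordLess_Field[OF less f] by simp
  qed
next
  assume "is_one s"
  then have "(ord_two, s) \<notin> ordLeq"
    using is_one_ordLeq[OF cord_ord_two] not_is_one_ord_two by blast
  then show "(s, ord_two) \<in> ordLess"
    using not_ordLeq_iff_ordLess cord_ord_two assms unfolding cord_def by blast
qed

lemma ordLeq_upper_bound:
  assumes "cord s" "cord t"
  obtains u where "u = s \<or> u = t" "(s, u) \<in> ordLeq" "(t, u) \<in> ordLeq"
proof (cases "(s, t) \<in> ordLeq")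
  case True
  then show ?thesis
    using that ordLeq_reflexive assms unfolding cord_def by blast
next
  case False
  then show ?thesis
    using that ordLeq_total ordLeq_reflexive assms unfolding cord_def by metis
qed

section \<open>Borel classes\<close>

lemma bsigma_subset_topspace: "bsigma X r A \<Longrightarrow> A \<subseteq> topspace X"
  by (induction rule: bsigma.induct) (auto dest: openin_subset)

lemma bsigma_is_one_iff:
  assumes "cord r" "is_one r"
  shows "bsigma X r A \<longleftrightarrow> openin X A"
proof
  assume "bsigma X r A"
  then show "openin X A"
    using assms by (cases rule: bsigma.cases) auto
qed (rule bsigma.base[OF assms])

definition bsigma_below :: "'a topology \<Rightarrow> nat rel \<Rightarrow> 'a set \<Rightarrow> bool" where
  "bsigma_below X r B \<longleftrightarrow> (\<exists>s. cord s \<and> (s, r) \<in> ordLess \<and> bsigma X s B)"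

definition compl_of :: "'a topology \<Rightarrow> ('a set \<Rightarrow> bool) \<Rightarrow> 'a set \<Rightarrow> bool" where
  "compl_of X P C \<longleftrightarrow> (\<exists>B. P B \<and> C = topspace X - B)"

lemma closedin_imp_compl_of:
  assumes "closedin X C" "\<And>U. openin X U \<Longrightarrow> P U"
  shows "compl_of X P C"
proof -
  have "C = topspace X - (topspace X - C)"
    using closedin_subset[OF assms(1)] by blast
  moreover have "P (topspace X - C)"
    using assms closedin_def by blast
  ultimately show ?thesis
    unfolding compl_of_def by blast
qed

lemma countable_union_of_compl_of_nat:
  assumes "P (topspace X)" "(countable union_of compl_of X P) A"
  obtains B :: "nat \<Rightarrow> 'a set" where "\<And>n. P (B n)" "A = (\<Union>n. topspace X - B n)"
proof -
  have "compl_of X P {}"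
    using assms(1) unfolding compl_of_def by blast
  from assms(2)[unfolded countable_union_of_explicit[of "compl_of X P", OF this]]
  obtain T where T: "\<forall>n::nat. compl_of X P (T n)" "\<Union>(range T) = A"
    by blast
  from T(1) have "\<forall>n. \<exists>B. P B \<and> T n = topspace X - B"
    unfolding compl_of_def .
  from choice[OF this] obtain B where "\<forall>n. P (B n) \<and> T n = topspace X - B n"
    by iprover
  with T(2) show ?thesis
    using that[of B] by simp
qed

lemma bsigma_below_openin:
  assumes "cord r" "\<not> is_one r" "openin X B"
  shows "bsigma_below X r B"
  using bsigma.base[OF cord_ord_one is_one_ord_one assms(3)] ord_one_ordLess[OF assms(1,2)]
    cord_ord_one unfolding bsigma_below_def by blast

lemma bsigma_step_iff:
  assumes r: "cord r" "\<not> is_one r"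
  shows "bsigma X r A \<longleftrightarrow> (countable union_of compl_of X (bsigma_below X r)) A"
proof
  assume "bsigma X r A"
  then have "\<exists>s B. (\<forall>n::nat. cord (s n) \<and> (s n, r) \<in> ordLess \<and> bsigma X (s n) (B n))
      \<and> A = (\<Union>n. topspace X - B n)"
    using r(2) by (cases rule: bsigma.cases) auto
  then obtain s B where sB: "\<And>n::nat. cord (s n) \<and> (s n, r) \<in> ordLess \<and> bsigma X (s n) (B n)"
    and A: "A = (\<Union>n. topspace X - B n)"
    by blast
  have "range (\<lambda>n. topspace X - B n) \<subseteq> Collect (compl_of X (bsigma_below X r))"
    using sB unfolding compl_of_def bsigma_below_def by blast
  then show "(countable union_of compl_of X (bsigma_below X r)) A"
    unfolding union_of_def A by (intro exI[of _ "range (\<lambda>n. topspace X - B n)"]) auto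
next
  assume "(countable union_of compl_of X (bsigma_below X r)) A"
  from countable_union_of_compl_of_nat[OF bsigma_below_openin[OF r openin_topspace] this]
  obtain B :: "nat \<Rightarrow> 'a set" where B: "\<And>n. bsigma_below X r (B n)" "A = (\<Union>n. topspace X - B n)"
    by blast
  then have "\<forall>n. \<exists>s. cord s \<and> (s, r) \<in> ordLess \<and> bsigma X s (B n)"
    unfolding bsigma_below_def by blast
  from choice[OF this] obtain s where "\<forall>n. cord (s n) \<and> (s n, r) \<in> ordLess \<and> bsigma X (s n) (B n)"
    by iprover
  then show "bsigma X r A"
    by (intro bsigma.step[OF r, where s=s and B=B]) (auto simp: B(2))
qed

lemma bsigma_empty: "cord r \<Longrightarrow> bsigma X r {}"
  by (cases "is_one r") (simp_all add: bsigma_is_one_iff bsigma_step_iff)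

lemma bsigma_UN:
  assumes "cord r" "countable I" "\<And>i. i \<in> I \<Longrightarrow> bsigma X r (A i)"
  shows "bsigma X r (\<Union>i\<in>I. A i)"
  using assms countable_union_of_UN[of I "compl_of X (bsigma_below X r)" A]
  by (cases "is_one r") (auto simp: bsigma_is_one_iff bsigma_step_iff)

lemma bsigma_Un:
  assumes "cord r" "bsigma X r A" "bsigma X r B"
  shows "bsigma X r (A \<union> B)"
  using assms countable_union_of_Un[of "compl_of X (bsigma_below X r)" A B]
  by (cases "is_one r") (auto simp: bsigma_is_one_iff bsigma_step_iff)

lemma bsigma_compl_below:
  assumes "cord r" "bsigma_below X r B"
  shows "bsigma X r (topspace X - B)"
proof -
  have "\<not> is_one r"
    using assms(2) ordLess_not_is_one unfolding bsigma_below_def by blast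
  then show ?thesis
    using assms countable_union_of_inc[of "compl_of X (bsigma_below X r)"]
    by (auto simp: bsigma_step_iff compl_of_def)
qed

lemma bsigma_topspace: "cord r \<Longrightarrow> bsigma X r (topspace X)"
  using bsigma_compl_below[OF _ bsigma_below_openin[OF _ _ openin_empty]]
  by (cases "is_one r") (auto simp: bsigma_is_one_iff)

text \<open>Metrizability enters here: open sets must be countable unions of closed sets.\<close>

lemma bsigma_openin:
  assumes X: "metrizable_space X" and r: "cord r" and U: "openin X U"
  shows "bsigma X r U"
proof (cases "is_one r")
  case False
  have "compl_of X (bsigma_below X r) C" if "closedin X C" for C
    using closedin_imp_compl_of[OF that bsigma_below_openin[OF r False]] .
  with open_imp_fsigma_in[OF X U] show ?thesis
    unfolding fsigma_in_def bsigma_step_iff[OF r False] by (rule union_of_mono)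
qed (simp add: bsigma_is_one_iff r U)

lemma bsigma_mono:
  assumes X: "metrizable_space X" and "cord s" "cord r" "(s, r) \<in> ordLeq" "bsigma X s A"
  shows "bsigma X r A"
proof (cases "is_one s")
  case True
  then show ?thesis
    using assms bsigma_openin bsigma_is_one_iff by blast
next
  case False
  then have "\<not> is_one r"
    using is_one_ordLeq assms by blast
  have "bsigma_below X s B \<Longrightarrow> bsigma_below X r B" for B
    using ordLess_ordLeq_trans assms(4) unfolding bsigma_below_def by blast
  then have "compl_of X (bsigma_below X s) C \<Longrightarrow> compl_of X (bsigma_below X r) C" for C
    unfolding compl_of_def by blast
  with assms(5) show ?thesis
    unfolding bsigma_step_iff[OF assms(2) False] bsigma_step_iff[OF assms(3) \<open>\<not> is_one r\<close>]
    by (rule union_of_mono)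
qed

lemma bsigma_below_imp_bsigma:
  "metrizable_space X \<Longrightarrow> cord r \<Longrightarrow> bsigma_below X r B \<Longrightarrow> bsigma X r B"
  using bsigma_mono ordLess_imp_ordLeq unfolding bsigma_below_def by blast

lemma bsigma_below_finite_bound:
  assumes X: "metrizable_space X" and r: "cord r" "\<not> is_one r"
    and "finite \<B>" "\<And>B. B \<in> \<B> \<Longrightarrow> bsigma_below X r B"
  obtains t where "cord t" "(t, r) \<in> ordLess" "\<And>B. B \<in> \<B> \<Longrightarrow> bsigma X t B"
proof -
  have "\<exists>t. cord t \<and> (t, r) \<in> ordLess \<and> (\<forall>B\<in>\<B>. bsigma X t B)"
    using assms(4,5)
  proof (induction \<B> rule: finite_induct)
    case empty
    then show ?case
      using cord_ord_one ord_one_ordLess[OF r] by blast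
  next
    case (insert C \<B>)
    then obtain t where t: "cord t" "(t, r) \<in> ordLess" "\<forall>B\<in>\<B>. bsigma X t B"
      by blast
    obtain s where s: "cord s" "(s, r) \<in> ordLess" "bsigma X s C"
      using insert.prems unfolding bsigma_below_def by blast
    obtain u where u: "u = t \<or> u = s" "(t, u) \<in> ordLeq" "(s, u) \<in> ordLeq"
      using ordLeq_upper_bound[OF t(1) s(1)] .
    have "cord u" "(u, r) \<in> ordLess"
      using u(1) t s by auto
    moreover have "bsigma X u C"
      using bsigma_mono[OF X s(1) \<open>cord u\<close> u(3) s(3)] .
    moreover have "\<forall>B\<in>\<B>. bsigma X u B"
      using bsigma_mono[OF X t(1) \<open>cord u\<close> u(2)] t(3) by blast
    ultimately show ?case
      by auto
  qed
  then show ?thesis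
    using that by blast
qed

lemma bsigma_Int:
  assumes X: "metrizable_space X" and r: "cord r" and "bsigma X r A" "bsigma X r B"
  shows "bsigma X r (A \<inter> B)"
proof (cases "is_one r")
  case True
  then show ?thesis
    using assms by (simp add: bsigma_is_one_iff openin_Int)
next
  case False
  have "compl_of X (bsigma_below X r) (S \<inter> T)"
    if ST: "compl_of X (bsigma_below X r) S \<and> compl_of X (bsigma_below X r) T" for S T
  proof -
    obtain C D where CD: "bsigma_below X r C" "bsigma_below X r D"
      "S = topspace X - C" "T = topspace X - D"
      using ST unfolding compl_of_def by blast
    obtain t where t: "cord t" "(t, r) \<in> ordLess" "\<And>E. E \<in> {C, D} \<Longrightarrow> bsigma X t E"
      using bsigma_below_finite_bound[OF X r False, of "{C, D}"] CD(1,2) by blast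
    have "bsigma X t (C \<union> D)"
      using bsigma_Un[OF t(1) t(3) t(3)] by simp
    then have "bsigma_below X r (C \<union> D)"
      using t(1,2) unfolding bsigma_below_def by blast
    moreover have "S \<inter> T = topspace X - (C \<union> D)"
      using CD by blast
    ultimately show ?thesis
      unfolding compl_of_def by blast
  qed
  then show ?thesis
    using assms(3,4) countable_union_of_Int[of "compl_of X (bsigma_below X r)" A B]
    unfolding bsigma_step_iff[OF r False] by blast
qed

definition bsigma_succ :: "'a topology \<Rightarrow> nat rel \<Rightarrow> 'a set \<Rightarrow> bool" where
  "bsigma_succ X r = countable union_of compl_of X (bsigma X r)"

lemma bsigma_succ_compl: "bsigma X r B \<Longrightarrow> bsigma_succ X r (topspace X - B)"
  unfolding bsigma_succ_def compl_of_def by (blast intro: countable_union_of_inc)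

lemma bsigma_succ_imp_bsigma:
  assumes "cord s" "cord r" "(s, r) \<in> ordLess" "bsigma_succ X s A"
  shows "bsigma X r A"
proof -
  have "\<not> is_one r"
    using ordLess_not_is_one assms(1,3) by blast
  have "compl_of X (bsigma X s) C \<Longrightarrow> compl_of X (bsigma_below X r) C" for C
    using assms(1,3) unfolding compl_of_def bsigma_below_def by blast
  with assms(4) show ?thesis
    unfolding bsigma_succ_def bsigma_step_iff[OF assms(2) \<open>\<not> is_one r\<close>] by (rule union_of_mono)
qed

lemma bsigma_imp_bsigma_succ:
  assumes X: "metrizable_space X" and r: "cord r" and A: "bsigma X r A"
  shows "bsigma_succ X r A"
proof (cases "is_one r")
  case True
  have "compl_of X (bsigma X r) C" if "closedin X C" for C
    using closedin_imp_compl_of[OF that] bsigma_is_one_iff[OF r True] by blast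
  moreover have "fsigma_in X A"
    using open_imp_fsigma_in[OF X] A bsigma_is_one_iff[OF r True] by blast
  ultimately show ?thesis
    unfolding bsigma_succ_def fsigma_in_def by (metis union_of_mono)
next
  case False
  have "compl_of X (bsigma_below X r) C \<Longrightarrow> compl_of X (bsigma X r) C" for C
    using bsigma_below_imp_bsigma[OF X r] unfolding compl_of_def by blast
  with A show ?thesis
    unfolding bsigma_succ_def bsigma_step_iff[OF r False] by (rule union_of_mono)
qed

lemma bsigma_succ_is_one_iff:
  assumes "cord r" "is_one r"
  shows "bsigma_succ X r A \<longleftrightarrow> bsigma X ord_two A"
proof -
  have "bsigma_below X ord_two = bsigma X r"
  proof (intro ext iffI)
    fix B
    assume "bsigma_below X ord_two B"
    then obtain s where "cord s" "(s, ord_two) \<in> ordLess" "bsigma X s B"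
      unfolding bsigma_below_def by blast
    then show "bsigma X r B"
      using ordLess_ord_two_iff bsigma_is_one_iff assms by blast
  next
    fix B
    assume "bsigma X r B"
    then show "bsigma_below X ord_two B"
      using bsigma_below_openin[OF cord_ord_two not_is_one_ord_two] bsigma_is_one_iff[OF assms]
      by blast
  qed
  then show ?thesis
    unfolding bsigma_succ_def bsigma_step_iff[OF cord_ord_two not_is_one_ord_two] by simp
qed

lemma bsigma_succ_nat_repr:
  assumes r: "cord r" "\<not> is_one r" and A: "bsigma_succ X r A"
  obtains S :: "nat \<Rightarrow> nat \<Rightarrow> 'a set"
  where "\<And>i j. bsigma_below X r (S i j)"
    "A = {x \<in> topspace X. \<exists>i. \<forall>j. x \<in> S i j}"
proof -
  from countable_union_of_compl_of_nat[OF bsigma_topspace[OF r(1)] A[unfolded bsigma_succ_def]]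
  obtain C :: "nat \<Rightarrow> 'a set" where C: "\<And>i. bsigma X r (C i)" "A = (\<Union>i. topspace X - C i)"
    by blast
  have "\<exists>V :: nat \<Rightarrow> 'a set. (\<forall>j. bsigma_below X r (V j)) \<and> C i = (\<Union>j. topspace X - V j)" for i
  proof -
    from countable_union_of_compl_of_nat[OF bsigma_below_openin[OF r openin_topspace]
        C(1)[of i, unfolded bsigma_step_iff[OF r]]]
    obtain V :: "nat \<Rightarrow> 'a set" where "\<And>j. bsigma_below X r (V j)" "C i = (\<Union>j. topspace X - V j)"
      by blast
    then show ?thesis
      by blast
  qed
  then have "\<forall>i. \<exists>V :: nat \<Rightarrow> 'a set. (\<forall>j. bsigma_below X r (V j)) \<and> C i = (\<Union>j. topspace X - V j)"
    by blast
  from choice[OF this] obtain S :: "nat \<Rightarrow> nat \<Rightarrow> 'a set"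
    where S: "\<forall>i. (\<forall>j. bsigma_below X r (S i j)) \<and> C i = (\<Union>j. topspace X - S i j)"
    by iprover
  have "A = (\<Union>i. topspace X \<inter> (\<Inter>j. S i j))"
    unfolding C(2) using S by auto
  also have "\<dots> = {x \<in> topspace X. \<exists>i. \<forall>j. x \<in> S i j}"
    by blast
  finally show ?thesis
    using that[of S] S by simp
qed

definition set_lattice :: "'a topology \<Rightarrow> ('a set \<Rightarrow> bool) \<Rightarrow> bool" where
  "set_lattice X P \<longleftrightarrow> P {} \<and> P (topspace X) \<and> (\<forall>S T. P S \<longrightarrow> P T \<longrightarrow> P (S \<union> T) \<and> P (S \<inter> T))"

lemma set_lattice_bsigma: "metrizable_space X \<Longrightarrow> cord r \<Longrightarrow> set_lattice X (bsigma X r)"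
  by (simp add: set_lattice_def bsigma_empty bsigma_topspace bsigma_Un bsigma_Int)

lemma set_lattice_bsigma_succ:
  assumes r: "cord r"
  shows "set_lattice X (bsigma_succ X r)"
proof -
  have Int: "compl_of X (bsigma X r) (S \<inter> T)"
    if ST: "compl_of X (bsigma X r) S \<and> compl_of X (bsigma X r) T" for S T
  proof -
    obtain B C where BC: "bsigma X r B" "bsigma X r C"
      and "S = topspace X - B" "T = topspace X - C"
      using ST unfolding compl_of_def by blast
    then have "S \<inter> T = topspace X - (B \<union> C)"
      by auto
    then show ?thesis
      using bsigma_Un[OF r BC] unfolding compl_of_def by blast
  qed
  have "bsigma_succ X r (topspace X)"
    using bsigma_succ_compl[OF bsigma_empty[OF r]] by simp
  then show ?thesis
    unfolding set_lattice_def bsigma_succ_def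
    using countable_union_of_Un countable_union_of_Int[where P="compl_of X (bsigma X r)", OF _ _ Int] by auto
qed

lemma set_lattice_finite_trace:
  assumes P: "set_lattice X P" and "finite I"
    and D: "\<And>i. i \<in> I \<Longrightarrow> P (topspace X \<inter> D i) \<and> P (topspace X - D i)"
  shows "P {x \<in> topspace X. \<phi> (\<lambda>i. i \<in> I \<and> x \<in> D i)}"
  using assms(2) D
proof (induction I arbitrary: \<phi> rule: finite_induct)
  case empty
  have "{x \<in> topspace X. \<phi> (\<lambda>i. i \<in> {} \<and> x \<in> D i)} = (if \<phi> (\<lambda>i. False) then topspace X else {})"
    by auto
  then show ?case
    using P unfolding set_lattice_def by simp
next
  case (insert i I)
  \<comment> \<open>written as \<open>\<beta>\<close>-redexes so that the induction hypothesis applies literally\<close>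
  define S1 where "S1 = {x \<in> topspace X. (\<lambda>v. \<phi> (v(i := True))) (\<lambda>c. c \<in> I \<and> x \<in> D c)}"
  define S2 where "S2 = {x \<in> topspace X. (\<lambda>v. \<phi> (v(i := False))) (\<lambda>c. c \<in> I \<and> x \<in> D c)}"
  have trace: "(\<lambda>c. (c = i \<or> c \<in> I) \<and> x \<in> D c) = (\<lambda>c. c \<in> I \<and> x \<in> D c)(i := x \<in> D i)" for x
    using insert.hyps(2) by (auto simp: fun_eq_iff)
  have "P S1"
    unfolding S1_def by (rule insert.IH) (use insert.prems in auto)
  moreover have "P S2"
    unfolding S2_def by (rule insert.IH) (use insert.prems in auto)
  moreover have "P (topspace X \<inter> D i)" "P (topspace X - D i)"
    using insert.prems by auto
  moreover have "{x \<in> topspace X. \<phi> (\<lambda>c. c \<in> insert i I \<and> x \<in> D c)}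
      = (topspace X \<inter> D i \<inter> S1) \<union> ((topspace X - D i) \<inter> S2)"
  proof (rule set_eqI)
    fix x
    show "x \<in> {x \<in> topspace X. \<phi> (\<lambda>c. c \<in> insert i I \<and> x \<in> D c)}
        \<longleftrightarrow> x \<in> (topspace X \<inter> D i \<inter> S1) \<union> ((topspace X - D i) \<inter> S2)"
      unfolding S1_def S2_def by (cases "x \<in> D i") (simp_all add: trace)
  qed
  ultimately show ?case
    using P unfolding set_lattice_def by simp
qed

lemma finite_trace_preimage:
  assumes X: "metrizable_space X" and r: "cord r" "\<not> is_one r"
    and I: "finite I" and D: "\<And>i. i \<in> I \<Longrightarrow> bsigma_below X r (D i)"
  shows "bsigma X r {x \<in> topspace X. G (\<lambda>i. i \<in> I \<and> x \<in> D i) \<in> A}"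
    and "\<exists>t. cord t \<and> (t, r) \<in> ordLess \<and>
      (\<forall>A. bsigma_succ X t {x \<in> topspace X. G (\<lambda>i. i \<in> I \<and> x \<in> D i) \<in> A})"
proof -
  have D_sub: "topspace X \<inter> D i = D i" if "i \<in> I" for i
    using D[OF that] bsigma_subset_topspace unfolding bsigma_below_def by blast
  show "bsigma X r {x \<in> topspace X. G (\<lambda>i. i \<in> I \<and> x \<in> D i) \<in> A}"
    by (rule set_lattice_finite_trace[where \<phi> = "\<lambda>v. G v \<in> A", OF set_lattice_bsigma[OF X r(1)] I])
      (simp add: D_sub bsigma_below_imp_bsigma[OF X r(1) D] bsigma_compl_below[OF r(1) D])
  obtain t where t: "cord t" "(t, r) \<in> ordLess" "\<And>B. B \<in> D ` I \<Longrightarrow> bsigma X t B"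
    using bsigma_below_finite_bound[OF X r finite_imageI[OF I]] D by blast
  have "bsigma_succ X t {x \<in> topspace X. G (\<lambda>i. i \<in> I \<and> x \<in> D i) \<in> A}" for A
    by (rule set_lattice_finite_trace[where \<phi> = "\<lambda>v. G v \<in> A", OF set_lattice_bsigma_succ[OF t(1)] I])
      (simp add: D_sub bsigma_imp_bsigma_succ[OF X t(1)] bsigma_succ_compl t(3))
  then show "\<exists>t. cord t \<and> (t, r) \<in> ordLess \<and>
      (\<forall>A. bsigma_succ X t {x \<in> topspace X. G (\<lambda>i. i \<in> I \<and> x \<in> D i) \<in> A})"
    using t by blast
qed

section \<open>Lebesgue's limit lemma\<close>

context Metric_space
begin

definition shrink :: "'a set \<Rightarrow> nat \<Rightarrow> 'a set" where
  "shrink U k = {y \<in> M. mball y (1 / Suc k) \<subseteq> U}"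

lemma shrink_subset: "shrink U k \<subseteq> U"
  unfolding shrink_def by force

lemma closedin_shrink: "closedin mtopology (shrink U k)"
proof -
  have "M - shrink U k = (\<Union>z\<in>M - U. mball z (1 / Suc k))"
    unfolding shrink_def by (auto simp: commute)
  then show ?thesis
    unfolding closedin_def shrink_def by auto
qed

lemma openin_imp_shrink:
  assumes "openin mtopology U" "y \<in> U"
  obtains k where "mball y (1 / Suc k) \<subseteq> shrink U k"
proof -
  obtain e where e: "e > 0" "mball y e \<subseteq> U"
    using assms openin_mtopology by blast
  obtain k where "inverse (real (Suc k)) < e / 2"
    using reals_Archimedean[of "e / 2"] e(1) by auto
  then have k: "2 / real (Suc k) < e"
    by (simp add: inverse_eq_divide)
  have "w \<in> shrink U k" if w: "w \<in> mball y (1 / Suc k)" for w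
  proof -
    have "z \<in> U" if z: "z \<in> mball w (1 / Suc k)" for z
    proof -
      have "d y z < e"
        using w z triangle[of y w z] k by auto
      then show "z \<in> U"
        using e(2) w z by auto
    qed
    then show ?thesis
      using w unfolding shrink_def by auto
  qed
  then have "mball y (1 / Suc k) \<subseteq> shrink U k"
    by blast
  then show ?thesis
    using that by blast
qed

lemma limitin_in_openin_iff:
  assumes U: "openin mtopology U" and lim: "limitin mtopology s l sequentially"
  shows "l \<in> U \<longleftrightarrow> (\<exists>k N. \<forall>n\<ge>N. s n \<in> shrink U k)"
proof
  assume "l \<in> U"
  then obtain k where k: "mball l (1 / Suc k) \<subseteq> shrink U k"
    using openin_imp_shrink U by blast
  have "l \<in> mball l (1 / Suc k)"
    using \<open>l \<in> U\<close> openin_subset[OF U] by auto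
  then have "eventually (\<lambda>n. s n \<in> mball l (1 / Suc k)) sequentially"
    using lim unfolding limitin_def by blast
  then show "\<exists>k N. \<forall>n\<ge>N. s n \<in> shrink U k"
    using k unfolding eventually_sequentially by blast
next
  assume "\<exists>k N. \<forall>n\<ge>N. s n \<in> shrink U k"
  then obtain k where "eventually (\<lambda>n. s n \<in> shrink U k) sequentially"
    unfolding eventually_sequentially by blast
  then have "l \<in> shrink U k"
    using limitin_closedin[OF lim closedin_shrink] by simp
  then show "l \<in> U"
    using shrink_subset by blast
qed

end

definition bsigma_succ_measurable :: "'a topology \<Rightarrow> 'b topology \<Rightarrow> nat rel \<Rightarrow> ('a \<Rightarrow> 'b) \<Rightarrow> bool" where
  "bsigma_succ_measurable X Y r f \<longleftrightarrow> f ` topspace X \<subseteq> topspace Y \<and>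
     (\<forall>U. openin Y U \<longrightarrow> bsigma_succ X r {x \<in> topspace X. f x \<in> U})"

lemma limitin_bsigma_succ_measurable:
  assumes Y: "metrizable_space Y" and r: "cord r"
    and g: "\<And>n U. openin Y U \<Longrightarrow> bsigma X r {x \<in> topspace X. g n x \<in> U}"
    and gY: "\<And>n x. x \<in> topspace X \<Longrightarrow> g n x \<in> topspace Y"
    and lim: "\<And>x. x \<in> topspace X \<Longrightarrow> limitin Y (\<lambda>n. g n x) (f x) sequentially"
  shows "bsigma_succ_measurable X Y r f"
proof -
  obtain M d where md: "Metric_space M d" "Y = Metric_space.mtopology M d"
    using Y metrizable_space_def by blast
  interpret m: Metric_space M d
    by (rule md(1))
  have "bsigma_succ X r {x \<in> topspace X. f x \<in> U}" if U: "openin Y U" for U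
  proof -
    define E where "E k N = {x \<in> topspace X. \<forall>n\<ge>N. g n x \<in> m.shrink U k}" for k N
    have "f x \<in> U \<longleftrightarrow> (\<exists>k N. \<forall>n\<ge>N. g n x \<in> m.shrink U k)" if "x \<in> topspace X" for x
      using m.limitin_in_openin_iff[of U "\<lambda>n. g n x" "f x"] U lim[OF that] unfolding md(2) by simp
    then have "{x \<in> topspace X. f x \<in> U} = (\<Union>k N. E k N)"
      unfolding E_def by auto
    moreover have "bsigma_succ X r (E k N)" for k N
    proof -
      have "closedin Y (m.shrink U k)"
        unfolding md(2) by (rule m.closedin_shrink)
      then have "bsigma X r (\<Union>n\<in>{N..}. {x \<in> topspace X. g n x \<in> topspace Y - m.shrink U k})"
        by (intro bsigma_UN[OF r] g) auto
      moreover have "E k N = topspace X - (\<Union>n\<in>{N..}. {x \<in> topspace X. g n x \<in> topspace Y - m.shrink U k})"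
        unfolding E_def using gY by auto
      ultimately show ?thesis
        using bsigma_succ_compl by simp
    qed
    ultimately show ?thesis
      unfolding bsigma_succ_def by (simp add: countable_union_of_UN)
  qed
  moreover have "f ` topspace X \<subseteq> topspace Y"
    using limitin_topspace[OF lim] by auto
  ultimately show ?thesis
    unfolding bsigma_succ_measurable_def by blast
qed

lemma delta0_fun_limit_bsigma_succ_measurable:
  assumes Y: "metrizable_space Y" and r: "cord r"
    and g: "\<And>n. delta0_fun X Y r (g n)"
    and lim: "\<And>x. x \<in> topspace X \<Longrightarrow> limitin Y (\<lambda>n. g n x) (f x) sequentially"
  shows "bsigma_succ_measurable X Y r f"
proof (rule limitin_bsigma_succ_measurable[OF Y r _ _ lim])
  show "bsigma X r {x \<in> topspace X. g n x \<in> U}" if "openin Y U" for n U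
    using g bsigma_openin[OF Y r that] unfolding delta0_fun_def by blast
  show "g n x \<in> topspace Y" if "x \<in> topspace X" for n x
    using g that unfolding delta0_fun_def by blast
qed

section \<open>Approximation by \<open>\<Delta>\<^sup>0\<^sub>\<xi>\<close>-functions\<close>

text \<open>A point \<open>x\<close> is coded by its trace \<open>P\<close> on sets indexed by \<open>(m, \<langle>k, i\<rangle>, j)\<close>, where
  \<open>\<langle>k, i\<rangle> = prod_encode (k, i)\<close>; the sets are chosen so that \<open>f x\<close> lies in the ball of radius
  \<open>1 / Suc m\<close> around \<open>y k\<close> iff \<open>\<exists>i. \<forall>j. P (m, \<langle>k, i\<rangle>, j)\<close>. At stage \<open>n\<close> only the trace on
  \<open>index_box n\<close> is read: \<open>centre\<close> guesses a centre of radius level \<open>m\<close>, and \<open>approx\<close> returns the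
  guess at the deepest level up to which the guesses are coherent.\<close>

definition index_box :: "nat \<Rightarrow> (nat \<times> nat \<times> nat) set" where
  "index_box n = {..n} \<times> {..n} \<times> {..n}"

definition first_witness :: "nat \<Rightarrow> nat \<Rightarrow> (nat \<times> nat \<times> nat \<Rightarrow> bool) \<Rightarrow> nat" where
  "first_witness n m P =
    (if m \<le> n \<and> (\<exists>l\<le>n. \<forall>j\<le>n. P (m, l, j)) then LEAST l. l \<le> n \<and> (\<forall>j\<le>n. P (m, l, j)) else 0)"

definition centre :: "(nat \<Rightarrow> 'b) \<Rightarrow> nat \<Rightarrow> nat \<Rightarrow> (nat \<times> nat \<times> nat \<Rightarrow> bool) \<Rightarrow> 'b" where
  "centre y n m P = y (fst (prod_decode (first_witness n m P)))"

definition coherent ::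
    "('b \<Rightarrow> 'b \<Rightarrow> real) \<Rightarrow> (nat \<Rightarrow> 'b) \<Rightarrow> nat \<Rightarrow> (nat \<times> nat \<times> nat \<Rightarrow> bool) \<Rightarrow> nat \<Rightarrow> bool" where
  "coherent d y n P m \<longleftrightarrow> (\<forall>j\<le>m. d (centre y n j P) (centre y n m P) < 2 / Suc j)"

definition approx :: "('b \<Rightarrow> 'b \<Rightarrow> real) \<Rightarrow> (nat \<Rightarrow> 'b) \<Rightarrow> nat \<Rightarrow> (nat \<times> nat \<times> nat \<Rightarrow> bool) \<Rightarrow> 'b" where
  "approx d y n P = centre y n (GREATEST m. m \<le> n \<and> coherent d y n P m) P"

lemma finite_index_box: "finite (index_box n)"
  unfolding index_box_def by simp

lemma approx_cong:
  assumes "\<And>c. c \<in> index_box n \<Longrightarrow> P c = P' c"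
  shows "approx d y n P = approx d y n P'"
proof -
  have "first_witness n m P = first_witness n m P'" for m
  proof (cases "m \<le> n")
    case True
    then have "(\<lambda>l. l \<le> n \<and> (\<forall>j\<le>n. P (m, l, j))) = (\<lambda>l. l \<le> n \<and> (\<forall>j\<le>n. P' (m, l, j)))"
      using assms unfolding index_box_def by (auto simp: fun_eq_iff)
    then show ?thesis
      unfolding first_witness_def by (simp add: fun_eq_iff) metis
  qed (simp add: first_witness_def)
  then show ?thesis
    unfolding approx_def coherent_def centre_def by simp
qed

lemma first_witness_eventually:
  assumes l0: "\<forall>j. P (m, l0, j)" and below: "\<forall>l<l0. \<exists>j. \<not> P (m, l, j)"
  shows "eventually (\<lambda>n. first_witness n m P = l0) sequentially"
proof -
  have "\<forall>l\<in>{..<l0}. eventually (\<lambda>n. \<exists>j\<le>n. \<not> P (m, l, j)) sequentially"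
    using below unfolding eventually_sequentially by (meson lessThan_iff order.trans)
  then have "eventually (\<lambda>n. \<forall>l\<in>{..<l0}. \<exists>j\<le>n. \<not> P (m, l, j)) sequentially"
    by (simp add: eventually_ball_finite)
  moreover have "eventually (\<lambda>n. m \<le> n \<and> l0 \<le> n) sequentially"
    by (simp add: eventually_conj eventually_ge_at_top)
  ultimately show ?thesis
  proof (rule eventually_elim2)
    fix n
    assume fail: "\<forall>l\<in>{..<l0}. \<exists>j\<le>n. \<not> P (m, l, j)" and n: "m \<le> n \<and> l0 \<le> n"
    have "(LEAST l. l \<le> n \<and> (\<forall>j\<le>n. P (m, l, j))) = l0"
    proof (rule Least_equality)
      show "l \<ge> l0" if "l \<le> n \<and> (\<forall>j\<le>n. P (m, l, j))" for l
        using that fail not_less by blast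
    qed (use l0 n in simp)
    then show "first_witness n m P = l0"
      unfolding first_witness_def using l0 n by auto
  qed
qed

lemma centre_eventually_const:
  assumes near: "\<And>m. \<exists>k. d (y k) p < 1 / Suc m"
    and trace: "\<And>m k. (\<exists>i. \<forall>j. P (m, prod_encode (k, i), j)) \<longleftrightarrow> d (y k) p < 1 / Suc m"
  obtains b where "\<And>m. d (y (b m)) p < 1 / Suc m"
    "\<And>m. eventually (\<lambda>n. centre y n m P = y (b m)) sequentially"
proof -
  have "\<exists>k. d (y k) p < 1 / Suc m \<and> eventually (\<lambda>n. centre y n m P = y k) sequentially" for m
  proof -
    define l0 where "l0 = (LEAST l. \<forall>j. P (m, l, j))"
    obtain k i where "\<forall>j. P (m, prod_encode (k, i), j)"
      using near trace by blast
    then have l0: "\<forall>j. P (m, l0, j)"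
      unfolding l0_def by (rule LeastI)
    have "\<forall>l<l0. \<exists>j. \<not> P (m, l, j)"
      using not_less_Least unfolding l0_def by blast
    then have ev: "eventually (\<lambda>n. first_witness n m P = l0) sequentially"
      using first_witness_eventually l0 by blast
    obtain k' i' where ki: "prod_decode l0 = (k', i')"
      by (cases "prod_decode l0")
    then have "l0 = prod_encode (k', i')"
      by (metis prod_decode_inverse)
    then have "d (y k') p < 1 / Suc m"
      using trace l0 by blast
    moreover have "eventually (\<lambda>n. centre y n m P = y k') sequentially"
      using ev ki unfolding centre_def by (auto elim: eventually_mono)
    ultimately show ?thesis
      by blast
  qed
  then have "\<forall>m. \<exists>k. d (y k) p < 1 / Suc m \<and> eventually (\<lambda>n. centre y n m P = y k) sequentially"
    by blast
  from choice[OF this] obtain b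
    where "\<forall>m. d (y (b m)) p < 1 / Suc m \<and> eventually (\<lambda>n. centre y n m P = y (b m)) sequentially"
    by iprover
  then show ?thesis
    using that by blast
qed

lemma approx_coherent_close:
  assumes "coherent d y n P m" "m \<le> n"
  shows "d (centre y n m P) (approx d y n P) < 2 / Suc m"
proof -
  let ?Q = "\<lambda>k. k \<le> n \<and> coherent d y n P k"
  have Q: "?Q m"
    using assms by simp
  have "?Q (Greatest ?Q)"
    by (rule GreatestI_nat[where P = ?Q and b = n, OF Q]) simp
  moreover have "m \<le> Greatest ?Q"
    by (rule Greatest_le_nat[where P = ?Q and b = n, OF Q]) simp
  ultimately show ?thesis
    unfolding approx_def coherent_def by simp
qed

context Metric_space
begin

lemma coherent_if_close:
  assumes "p \<in> M" "\<And>j. j \<le> m \<Longrightarrow> centre y n j P \<in> M \<and> d (centre y n j P) p < 1 / Suc j"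
  shows "coherent d y n P m"
  unfolding coherent_def
proof (intro allI impI)
  fix j
  assume "j \<le> m"
  have "d (centre y n j P) (centre y n m P) \<le> d (centre y n j P) p + d p (centre y n m P)"
    using assms \<open>j \<le> m\<close> triangle by blast
  also have "\<dots> = d (centre y n j P) p + d (centre y n m P) p"
    using assms commute by simp
  also have "\<dots> < 1 / Suc j + 1 / Suc m"
    using assms(2)[of j] assms(2)[of m] \<open>j \<le> m\<close> by simp
  also have "\<dots> \<le> 2 / Suc j"
    using \<open>j \<le> m\<close> divide_left_mono[of "real (Suc j)" "real (Suc m)" 1] by simp
  finally show "d (centre y n j P) (centre y n m P) < 2 / Suc j" .
qed

lemma approx_limitin:
  assumes p: "p \<in> M" and y: "\<And>k. y k \<in> M" and dense: "\<And>e. e > 0 \<Longrightarrow> \<exists>k. d (y k) p < e"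
    and trace: "\<And>m k. (\<exists>i. \<forall>j. P (m, prod_encode (k, i), j)) \<longleftrightarrow> d (y k) p < 1 / Suc m"
  shows "limitin mtopology (\<lambda>n. approx d y n P) p sequentially"
  unfolding limitin_metric
proof (intro conjI allI impI p)
  fix e :: real
  assume "e > 0"
  obtain m where "inverse (real (Suc m)) < e / 3"
    using reals_Archimedean[of "e / 3"] \<open>e > 0\<close> by auto
  then have m: "3 / real (Suc m) < e"
    by (simp add: inverse_eq_divide field_simps)
  have "\<exists>k. d (y k) p < 1 / Suc j" for j
    using dense[of "1 / Suc j"] by simp
  then obtain b where b: "\<And>j. d (y (b j)) p < 1 / Suc j"
    "\<And>j. eventually (\<lambda>n. centre y n j P = y (b j)) sequentially"
    using centre_eventually_const[of d y p P] trace by blast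
  have "eventually (\<lambda>n. \<forall>j\<in>{..m}. centre y n j P = y (b j)) sequentially"
    using b(2) by (simp add: eventually_ball_finite)
  then show "eventually (\<lambda>n. approx d y n P \<in> M \<and> d (approx d y n P) p < e) sequentially"
    using eventually_ge_at_top[of m]
  proof (rule eventually_elim2)
    fix n
    assume n: "\<forall>j\<in>{..m}. centre y n j P = y (b j)" "m \<le> n"
    have "coherent d y n P m"
      by (rule coherent_if_close[OF p]) (use n(1) b(1) y in simp)
    moreover have "centre y n m P = y (b m)"
      using n(1) by simp
    ultimately have "d (y (b m)) (approx d y n P) < 2 / Suc m"
      using approx_coherent_close[OF _ n(2)] by metis
    moreover have "approx d y n P \<in> M"
      unfolding approx_def centre_def using y by simp
    moreover have "d (approx d y n P) p \<le> d (y (b m)) (approx d y n P) + d (y (b m)) p"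
      using triangle[of "approx d y n P" "y (b m)" p] commute y p \<open>approx d y n P \<in> M\<close> by simp
    ultimately have "d (approx d y n P) p < 2 / Suc m + 1 / Suc m"
      using b(1)[of m] by linarith
    also have "\<dots> < e"
      using m by simp
    finally show "approx d y n P \<in> M \<and> d (approx d y n P) p < e"
      using \<open>approx d y n P \<in> M\<close> by blast
  qed
qed

lemma separable_dense_sequence:
  assumes "separable_space mtopology" "M \<noteq> {}"
  obtains y :: "nat \<Rightarrow> 'a" where "\<And>k. y k \<in> M" "\<And>p e. p \<in> M \<Longrightarrow> e > 0 \<Longrightarrow> \<exists>k. d (y k) p < e"
proof -
  obtain C where C: "countable C" "C \<subseteq> M" "mtopology closure_of C = M"
    using assms(1) unfolding separable_space_def by auto
  then have "C \<noteq> {}"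
    using assms(2) by auto
  have "from_nat_into C k \<in> M" for k
    using from_nat_into[OF \<open>C \<noteq> {}\<close>] C(2) by blast
  moreover have "\<exists>k. d (from_nat_into C k) p < e" if pe: "p \<in> M" "e > 0" for p e
  proof -
    have "p \<in> mtopology closure_of C"
      using C(3) pe(1) by simp
    then obtain z where "z \<in> C" "z \<in> mball p e"
      using pe(2) unfolding metric_closure_of by blast
    moreover obtain k where "z = from_nat_into C k"
      using \<open>z \<in> C\<close> range_from_nat_into[OF \<open>C \<noteq> {}\<close> C(1)] by (metis imageE)
    ultimately show ?thesis
      using commute by auto
  qed
  ultimately show ?thesis
    using that[of "from_nat_into C"] by blast
qed

end

lemma bsigma_succ_measurable_trace_family:
  assumes r: "cord r" "\<not> is_one r" and f: "bsigma_succ_measurable X Y r f"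
    and U: "\<And>m k. openin Y (U m k)"
  obtains D :: "nat \<times> nat \<times> nat \<Rightarrow> 'a set"
  where "\<And>c. bsigma_below X r (D c)"
    "\<And>x m k. x \<in> topspace X \<Longrightarrow> (\<exists>i. \<forall>j. x \<in> D (m, prod_encode (k, i), j)) \<longleftrightarrow> f x \<in> U m k"
proof -
  have "\<exists>S :: nat \<Rightarrow> nat \<Rightarrow> 'a set. (\<forall>i j. bsigma_below X r (S i j))
      \<and> {x \<in> topspace X. f x \<in> U (fst a) (snd a)} = {x \<in> topspace X. \<exists>i. \<forall>j. x \<in> S i j}" for a
  proof -
    have "bsigma_succ X r {x \<in> topspace X. f x \<in> U (fst a) (snd a)}"
      using f U unfolding bsigma_succ_measurable_def by blast
    then obtain S :: "nat \<Rightarrow> nat \<Rightarrow> 'a set"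
      where "\<And>i j. bsigma_below X r (S i j)"
        "{x \<in> topspace X. f x \<in> U (fst a) (snd a)} = {x \<in> topspace X. \<exists>i. \<forall>j. x \<in> S i j}"
      by (rule bsigma_succ_nat_repr[OF r]) iprover
    then have "(\<forall>i j. bsigma_below X r (S i j))
      \<and> {x \<in> topspace X. f x \<in> U (fst a) (snd a)} = {x \<in> topspace X. \<exists>i. \<forall>j. x \<in> S i j}"
      by simp
    then show ?thesis
      by blast
  qed
  then have "\<forall>a. \<exists>S :: nat \<Rightarrow> nat \<Rightarrow> 'a set. (\<forall>i j. bsigma_below X r (S i j))
      \<and> {x \<in> topspace X. f x \<in> U (fst a) (snd a)} = {x \<in> topspace X. \<exists>i. \<forall>j. x \<in> S i j}"
    by blast
  from choice[OF this] obtain S :: "nat \<times> nat \<Rightarrow> nat \<Rightarrow> nat \<Rightarrow> 'a set"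
    where "\<forall>a. (\<forall>i j. bsigma_below X r (S a i j))
      \<and> {x \<in> topspace X. f x \<in> U (fst a) (snd a)} = {x \<in> topspace X. \<exists>i. \<forall>j. x \<in> S a i j}"
    by iprover
  then have S: "\<And>a i j. bsigma_below X r (S a i j)"
    "\<And>a. {x \<in> topspace X. f x \<in> U (fst a) (snd a)} = {x \<in> topspace X. \<exists>i. \<forall>j. x \<in> S a i j}"
    by (simp_all del: split_paired_All)
  define D where "D c = (case c of (m, l, j) \<Rightarrow> S (m, fst (prod_decode l)) (snd (prod_decode l)) j)"
    for c :: "nat \<times> nat \<times> nat"
  show ?thesis
  proof (rule that[of D])
    show "bsigma_below X r (D c)" for c
      unfolding D_def using S(1) by (simp split: prod.split)
    fix x m k
    assume x: "x \<in> topspace X"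
    have "x \<in> {x \<in> topspace X. f x \<in> U m k} \<longleftrightarrow> x \<in> {x \<in> topspace X. \<exists>i. \<forall>j. x \<in> S (m, k) i j}"
      using S(2)[of "(m, k)"] by simp
    then show "(\<exists>i. \<forall>j. x \<in> D (m, prod_encode (k, i), j)) \<longleftrightarrow> f x \<in> U m k"
      using x unfolding D_def by simp
  qed
qed

lemma bsigma_succ_measurable_delta_limit:
  assumes X: "metrizable_space X" and Y: "metrizable_space Y" "separable_space Y"
    and r: "cord r" "\<not> is_one r" and f: "bsigma_succ_measurable X Y r f"
  obtains h where "\<And>n. delta0_fun X Y r (h n)"
    "\<And>n. \<exists>t. cord t \<and> (t, r) \<in> ordLess \<and> bsigma_succ_measurable X Y t (h n)"
    "\<And>x. x \<in> topspace X \<Longrightarrow> limitin Y (\<lambda>n. h n x) (f x) sequentially"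
proof (cases "topspace X = {}")
  case True
  have "delta0_fun X Y r f" "bsigma_succ_measurable X Y ord_one f"
    unfolding delta0_fun_def bsigma_succ_measurable_def bsigma_succ_def True
    by (simp_all add: bsigma_empty[OF r(1)])
  then show ?thesis
    using that[of "\<lambda>n. f"] cord_ord_one ord_one_ordLess[OF r] True by blast
next
  case False
  obtain M d where md: "Metric_space M d" "Y = Metric_space.mtopology M d"
    using Y(1) metrizable_space_def by blast
  interpret m: Metric_space M d
    by (rule md(1))
  have fM: "f x \<in> M" if "x \<in> topspace X" for x
    using f that md(2) unfolding bsigma_succ_measurable_def by auto
  then obtain y :: "nat \<Rightarrow> 'b" where y: "\<And>k. y k \<in> M"
    and dense: "\<And>p e. p \<in> M \<Longrightarrow> e > 0 \<Longrightarrow> \<exists>k. d (y k) p < e"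
    using m.separable_dense_sequence Y(2) md(2) False by blast
  have balls: "openin Y (m.mball (y k) (1 / Suc m))" for m k
    using md(2) by simp
  obtain D :: "nat \<times> nat \<times> nat \<Rightarrow> 'a set" where D: "\<And>c. bsigma_below X r (D c)"
    and trace: "\<And>x m k. x \<in> topspace X \<Longrightarrow>
      (\<exists>i. \<forall>j. x \<in> D (m, prod_encode (k, i), j)) \<longleftrightarrow> f x \<in> m.mball (y k) (1 / Suc m)"
    using bsigma_succ_measurable_trace_family[where U = "\<lambda>m k. m.mball (y k) (1 / Suc m)", OF r f balls]
    by metis
  define h where "h n x = approx d y n (\<lambda>c. c \<in> index_box n \<and> x \<in> D c)" for n x
  have hY: "h n ` topspace X \<subseteq> topspace Y" for n
    unfolding h_def approx_def centre_def using y md(2) by auto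
  show ?thesis
  proof (rule that)
    fix n
    have "bsigma X r {x \<in> topspace X. h n x \<in> A}" for A
      unfolding h_def by (rule finite_trace_preimage(1)[where D = D, OF X r finite_index_box D])
    then show "delta0_fun X Y r (h n)"
      unfolding delta0_fun_def using hY by blast
    obtain t where "cord t" "(t, r) \<in> ordLess" "\<forall>A. bsigma_succ X t {x \<in> topspace X. h n x \<in> A}"
      unfolding h_def using finite_trace_preimage(2)[where D = D and I = "index_box n", OF X r finite_index_box D]
      by blast
    then show "\<exists>t. cord t \<and> (t, r) \<in> ordLess \<and> bsigma_succ_measurable X Y t (h n)"
      unfolding bsigma_succ_measurable_def using hY by blast
  next
    fix x
    assume x: "x \<in> topspace X"
    have "h n x = approx d y n (\<lambda>c. x \<in> D c)" for n
      unfolding h_def by (rule approx_cong) simp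
    moreover have "(\<exists>i. \<forall>j. x \<in> D (m, prod_encode (k, i), j)) \<longleftrightarrow> d (y k) (f x) < 1 / Suc m" for m k
      using trace[OF x] y fM[OF x] by simp
    ultimately show "limitin Y (\<lambda>n. h n x) (f x) sequentially"
      using m.approx_limitin[OF fM[OF x] y dense[OF fM[OF x]]] md(2) by simp
  qed
qed

section \<open>Baire classes\<close>

lemma baire_cls_imp_bsigma_succ_measurable:
  assumes "baire_cls X Y r f" "metrizable_space Y"
  shows "bsigma_succ_measurable X Y r f"
  using assms
proof (induction rule: baire_cls.induct)
  case (base r f X Y)
  then show ?case
    using bsigma_succ_is_one_iff unfolding bsigma_succ_measurable_def by blast
next
  case (step r f X Y s g)
  have IH: "cord (s n)" "(s n, r) \<in> ordLess" "bsigma_succ_measurable X Y (s n) (g n)" for n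
    using step by auto
  show ?case
  proof (rule limitin_bsigma_succ_measurable[where g = g, OF step.prems step.hyps(1)])
    show "bsigma X r {x \<in> topspace X. g n x \<in> U}" if "openin Y U" for n U
      using bsigma_succ_imp_bsigma[OF IH(1) step.hyps(1) IH(2)] IH(3) that
      unfolding bsigma_succ_measurable_def by blast
    show "g n x \<in> topspace Y" if "x \<in> topspace X" for n x
      using IH(3) that unfolding bsigma_succ_measurable_def by blast
  qed (use step.hyps in blast)
qed

lemma bsigma_succ_measurable_imp_baire_cls:
  assumes X: "metrizable_space X" and Y: "metrizable_space Y" "separable_space Y"
    and "cord r" "bsigma_succ_measurable X Y r f"
  shows "baire_cls X Y r f"
  using assms(4,5)
proof (induction r arbitrary: f rule: wf_induct[OF wf_ordLess])
  case (1 r)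
  have fY: "f ` topspace X \<subseteq> topspace Y"
    using 1(3) unfolding bsigma_succ_measurable_def by blast
  show ?case
  proof (cases "is_one r")
    case True
    have "bsigma X ord_two {x \<in> topspace X. f x \<in> U}" if "openin Y U" for U
      using 1(3) that bsigma_succ_is_one_iff[OF 1(2) True] unfolding bsigma_succ_measurable_def
      by blast
    then show ?thesis
      using baire_cls.base[OF 1(2) True fY] by blast
  next
    case False
    obtain h where h: "\<And>n. \<exists>t. cord t \<and> (t, r) \<in> ordLess \<and> bsigma_succ_measurable X Y t (h n)"
      "\<And>x. x \<in> topspace X \<Longrightarrow> limitin Y (\<lambda>n. h n x) (f x) sequentially"
      using bsigma_succ_measurable_delta_limit[OF X Y 1(2) False 1(3)] by metis
    then have "\<forall>n. \<exists>t. cord t \<and> (t, r) \<in> ordLess \<and> bsigma_succ_measurable X Y t (h n)"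
      by blast
    from choice[OF this] obtain t
      where t: "\<forall>n. cord (t n) \<and> (t n, r) \<in> ordLess \<and> bsigma_succ_measurable X Y (t n) (h n)"
      by iprover
    then have "cord (t n) \<and> (t n, r) \<in> ordLess \<and> baire_cls X Y (t n) (h n)" for n
      using 1(1)[rule_format, of "t n" "h n"] by blast
    then show ?thesis
      by (rule baire_cls.step[where g = h, OF 1(2) False fY]) (use h(2) in blast)
  qed
qed

theorem mainTheorem6:
  fixes X :: "'a topology" and Y :: "'b topology" and r :: "nat rel" and f :: "'a \<Rightarrow> 'b"
  assumes "metrizable_space X" and "metrizable_space Y" and "separable_space Y"
    and "cord r"
    and "f ` topspace X \<subseteq> topspace Y"
  shows "((\<exists>g. (\<forall>n. delta0_fun X Y r (g n)) \<and>
             (\<forall>x\<in>topspace X. limitin Y (\<lambda>n. g n x) (f x) sequentially))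
          \<longrightarrow> baire_cls X Y r f)
       \<and> ((\<not> is_one r \<and> baire_cls X Y r f) \<longrightarrow>
          (\<exists>g. (\<forall>n. delta0_fun X Y r (g n)) \<and>
             (\<forall>x\<in>topspace X. limitin Y (\<lambda>n. g n x) (f x) sequentially)))"
proof (intro conjI impI)
  assume "\<exists>g. (\<forall>n. delta0_fun X Y r (g n)) \<and> (\<forall>x\<in>topspace X. limitin Y (\<lambda>n. g n x) (f x) sequentially)"
  then have "bsigma_succ_measurable X Y r f"
    using delta0_fun_limit_bsigma_succ_measurable[OF assms(2,4)] by blast
  then show "baire_cls X Y r f"
    using bsigma_succ_measurable_imp_baire_cls assms(1-4) by blast
next
  assume "\<not> is_one r \<and> baire_cls X Y r f"
  then obtain g where "\<And>n. delta0_fun X Y r (g n)"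
    "\<And>x. x \<in> topspace X \<Longrightarrow> limitin Y (\<lambda>n. g n x) (f x) sequentially"
    using bsigma_succ_measurable_delta_limit[OF assms(1-4)]
      baire_cls_imp_bsigma_succ_measurable[OF _ assms(2)] by metis
  then show "\<exists>g. (\<forall>n. delta0_fun X Y r (g n)) \<and> (\<forall>x\<in>topspace X. limitin Y (\<lambda>n. g n x) (f x) sequentially)"
    by blast
qed

end
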